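(* Assume that $T$ acts faithfully on $W$ and that $W$ is weakly symmetric. Let $\lambda\in Y(T)_{\mathbb R}$. Then $\Phi_\lambda$ is contained in $H_\lambda^\perp\subset Y(T)_{\mathbb R}$ and is homeomorphic to a sphere of dimension $\dim H_\lambda^\perp-1$ (i.e. to the unit sphere of $H_\lambda^\perp$; this is the empty set if $H_\lambda^\perp=0$).
   Context: $T$ is a torus over an algebraically closed field $k$ of characteristic $0$, with character group $X(T)$, cocharacter group $Y(T)$ and pairing $\langle\,,\rangle$ extended to $Y(T)_{\mathbb R}\times X(T)_{\mathbb R}\to\mathbb R$. $W$ is a $d$-dimensional $T$-representation with weights $\alpha_1,\dots,\alpha_d$. $W$ is weakly symmetric if for every line $\ell\subset X(T)_{\mathbb R}$ through $0$ the cone spanned by the $\alpha_i\in\ell$ is $\{0\}$ or $\ell$. Fix a positive definite quadratic form on $Y(T)_{\mathbb R}$ with norm $\|\cdot\|$ and let $B=\{\mu\in Y(T)_{\mathbb R}:\|\mu\|<1\}$. For $\lambda\in Y(T)_{\mathbb R}$ put $T_\lambda=\{i:\langle\lambda,\alpha_i\rangle<0\}$, $T^0_\lambda=\{i:\langle\lambda,\alpha_i\rangle=0\}$. Write $\lambda\sim\lambda'$ iff $T_\lambda=T_{\lambda'}$. Set $B_\lambda=\{\mu\in B:\mu\sim\lambda\}$, $\Phi_\lambda=\overline{B_\lambda}\setminus B_\lambda$, $H_\lambda=\operatorname{span}_{\mathbb R}\{\alpha_i:i\in T^0_\lambda\}\subset X(T)_{\mathbb R}$, and $H_\lambda^\perp=\{\mu\in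 Y(T)_{\mathbb R}:\langle\mu,h\rangle=0\ \forall h\in H_\lambda\}$. *)

theory Defs
  imports "HOL-Analysis.Analysis"
begin

text \<open>Model: X(T) = int^'n (the rank of T is CARD('n)), X(T)_R = Y(T)_R = real^'n,
  pairing = standard dot product. Weights of W: alpha 0, ..., alpha (d-1).\<close>

definition wt :: "(nat \<Rightarrow> int ^ 'n) \<Rightarrow> nat \<Rightarrow> real ^ 'n" where
  "wt alpha i = (\<chi> j. real_of_int (alpha i $ j))"

text \<open>T acts faithfully: the weights generate the character lattice X(T).\<close>
definition faithful_weights :: "nat \<Rightarrow> (nat \<Rightarrow> int ^ 'n::finite) \<Rightarrow> bool" where
  "faithful_weights d alpha \<longleftrightarrow>
     (\<forall>x :: int ^ 'n. \<exists>c :: nat \<Rightarrow> int. x = (\<Sum>i<d. c i *s alpha i))"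

definition line_cone :: "nat \<Rightarrow> (nat \<Rightarrow> int ^ 'n::finite) \<Rightarrow> real ^ 'n \<Rightarrow> (real ^ 'n) set" where
  "line_cone d alpha v =
     {(\<Sum>i\<in>{i. i < d \<and> wt alpha i \<in> span {v}}. c i *\<^sub>R wt alpha i) | c. \<forall>i. 0 \<le> c i}"

definition weakly_symmetric :: "nat \<Rightarrow> (nat \<Rightarrow> int ^ 'n::finite) \<Rightarrow> bool" where
  "weakly_symmetric d alpha \<longleftrightarrow>
     (\<forall>v. v \<noteq> 0 \<longrightarrow> line_cone d alpha v = {0} \<or> line_cone d alpha v = span {v})"

definition Tneg :: "nat \<Rightarrow> (nat \<Rightarrow> int ^ 'n::finite) \<Rightarrow> real ^ 'n \<Rightarrow> nat set" where
  "Tneg d alpha lam = {i. i < d \<and> lam \<bullet> wt alpha i < 0}"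

definition Tzero :: "nat \<Rightarrow> (nat \<Rightarrow> int ^ 'n::finite) \<Rightarrow> real ^ 'n \<Rightarrow> nat set" where
  "Tzero d alpha lam = {i. i < d \<and> lam \<bullet> wt alpha i = 0}"

definition pos_def_form :: "real ^ 'n ^ 'n \<Rightarrow> bool" where
  "pos_def_form Q \<longleftrightarrow> transpose Q = Q \<and> (\<forall>x. x \<noteq> 0 \<longrightarrow> 0 < x \<bullet> (Q *v x))"

definition qball :: "real ^ 'n ^ 'n \<Rightarrow> (real ^ 'n) set" where
  "qball Q = {mu. mu \<bullet> (Q *v mu) < 1}"

definition Bset :: "nat \<Rightarrow> (nat \<Rightarrow> int ^ 'n::finite) \<Rightarrow> real ^ 'n ^ 'n \<Rightarrow> real ^ 'n \<Rightarrow> (real ^ 'n) set" where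
  "Bset d alpha Q lam = {mu \<in> qball Q. Tneg d alpha mu = Tneg d alpha lam}"

definition Phi :: "nat \<Rightarrow> (nat \<Rightarrow> int ^ 'n::finite) \<Rightarrow> real ^ 'n ^ 'n \<Rightarrow> real ^ 'n \<Rightarrow> (real ^ 'n) set" where
  "Phi d alpha Q lam = closure (Bset d alpha Q lam) - Bset d alpha Q lam"

definition Hsp :: "nat \<Rightarrow> (nat \<Rightarrow> int ^ 'n::finite) \<Rightarrow> real ^ 'n \<Rightarrow> (real ^ 'n) set" where
  "Hsp d alpha lam = span (wt alpha ` Tzero d alpha lam)"

definition Hperp :: "nat \<Rightarrow> (nat \<Rightarrow> int ^ 'n::finite) \<Rightarrow> real ^ 'n \<Rightarrow> (real ^ 'n) set" where
  "Hperp d alpha lam = {mu. \<forall>h\<in>Hsp d alpha lam. mu \<bullet> h = 0}"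

end

theory Submission
  imports Defs
begin

text \<open>Weak symmetry gives every nonzero weight \<open>\<alpha>\<close> an opposite weight \<open>-c\<alpha>\<close> with \<open>c > 0\<close>.
  Hence a \<open>\<mu>\<close> with \<open>T\<^sub>\<mu> = T\<^sub>\<lambda>\<close> pairs non-negatively with both \<open>\<alpha>\<close> and \<open>-c\<alpha>\<close> whenever
  \<open>\<alpha>\<close> vanishes on \<open>\<lambda>\<close>, so \<open>\<mu> \<in> H\<^sub>\<lambda>\<^sup>\<perp>\<close>; conversely, on \<open>H\<^sub>\<lambda>\<^sup>\<perp>\<close> the condition \<open>T\<^sub>\<mu> = T\<^sub>\<lambda>\<close>
  reduces to the open convex condition \<open>T\<^sub>\<lambda> \<subseteq> T\<^sub>\<mu>\<close>. So \<open>B\<^sub>\<lambda>\<close> is the trace on the subspace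
  \<open>H\<^sub>\<lambda>\<^sup>\<perp>\<close> of a bounded open convex set, nonempty since it contains small multiples of \<open>\<lambda>\<close>;
  it is therefore relatively open in \<open>H\<^sub>\<lambda>\<^sup>\<perp>\<close>, and \<open>\<Phi>\<^sub>\<lambda>\<close> is its relative frontier, which is
  homeomorphic to the unit sphere of \<open>H\<^sub>\<lambda>\<^sup>\<perp>\<close>.\<close>

lemma quadratic_form_symmetric:
  fixes Q :: "real ^ 'n ^ 'n"
  assumes "transpose Q = Q"
  shows "x \<bullet> (Q *v y) = y \<bullet> (Q *v x)"
  by (metis assms dot_lmul_matrix inner_commute transpose_matrix_vector)

lemma quadratic_form_convex_combination:
  fixes Q :: "real ^ 'n ^ 'n"
  assumes "transpose Q = Q" and "u + v = 1"
  shows "(u *\<^sub>R x + v *\<^sub>R y) \<bullet> (Q *v (u *\<^sub>R x + v *\<^sub>R y))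
    = u * (x \<bullet> (Q *v x)) + v * (y \<bullet> (Q *v y)) - u * v * ((x - y) \<bullet> (Q *v (x - y)))"
proof -
  have v: "v = 1 - u" using assms(2) by simp
  show ?thesis
    using quadratic_form_symmetric[OF assms(1), of y x] unfolding v
    by (simp add: matrix_vector_right_distrib matrix_vector_mult_diff_distrib matrix_vector_mult_scaleR
        inner_add_left inner_add_right inner_diff_left inner_diff_right algebra_simps)
qed

lemma pos_def_form_lower_bound:
  fixes Q :: "real ^ 'n ^ 'n"
  assumes "pos_def_form Q"
  obtains m where "m > 0" and "\<And>x. m * (norm x)\<^sup>2 \<le> x \<bullet> (Q *v x)"
proof -
  have cont: "continuous_on (sphere 0 1) (\<lambda>x::real^'n. x \<bullet> (Q *v x))"
    by (intro continuous_intros matrix_vector_mult_linear_continuous_on)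
  have "sphere (0::real^'n) 1 \<noteq> {}" by (simp add: sphere_eq_empty)
  then obtain z where z: "z \<in> sphere 0 1" and min: "\<And>y. y \<in> sphere 0 1 \<Longrightarrow> z \<bullet> (Q *v z) \<le> y \<bullet> (Q *v y)"
    using continuous_attains_inf[OF compact_sphere _ cont] by blast
  have "z \<noteq> 0" using z by auto
  then have "z \<bullet> (Q *v z) > 0" using assms by (simp add: pos_def_form_def)
  moreover have "z \<bullet> (Q *v z) * (norm x)\<^sup>2 \<le> x \<bullet> (Q *v x)" for x
  proof (cases "x = 0")
    case False
    have "z \<bullet> (Q *v z) \<le> (x /\<^sub>R norm x) \<bullet> (Q *v (x /\<^sub>R norm x))"
      using False by (intro min) simp
    also have "\<dots> = (x \<bullet> (Q *v x)) / (norm x)\<^sup>2"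
      by (simp add: matrix_vector_mult_scaleR power2_eq_square divide_inverse)
    finally show ?thesis using False by (simp add: field_simps)
  qed simp
  ultimately show ?thesis using that by blast
qed

lemma open_qball: "open (qball Q)"
  unfolding qball_def
  by (intro open_Collect_less continuous_intros matrix_vector_mult_linear_continuous_on)

lemma convex_qball:
  fixes Q :: "real ^ 'n ^ 'n"
  assumes "transpose Q = Q" and "\<And>x. 0 \<le> x \<bullet> (Q *v x)"
  shows "convex (qball Q)"
  unfolding convex_def qball_def
proof (intro ballI allI impI, clarsimp)
  fix x y :: "real ^ 'n" and u v :: real
  assume x: "x \<bullet> (Q *v x) < 1" and y: "y \<bullet> (Q *v y) < 1"
    and u: "0 \<le> u" and v: "0 \<le> v" and uv: "u + v = 1"
  have "u * (x \<bullet> (Q *v x)) + v * (y \<bullet> (Q *v y)) < 1"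
    using x y u v uv by (smt (verit) mult_left_le mult_strict_left_mono)
  moreover have "0 \<le> u * v * ((x - y) \<bullet> (Q *v (x - y)))"
    using u v assms(2) by simp
  ultimately show "(u *\<^sub>R x + v *\<^sub>R y) \<bullet> (Q *v (u *\<^sub>R x + v *\<^sub>R y)) < 1"
    unfolding quadratic_form_convex_combination[OF assms(1) uv] by linarith
qed

lemma bounded_qball:
  assumes "pos_def_form Q"
  shows "bounded (qball Q)"
proof -
  obtain m where m: "m > 0" "\<And>x. m * (norm x)\<^sup>2 \<le> x \<bullet> (Q *v x)"
    using pos_def_form_lower_bound[OF assms] by blast
  have "norm x \<le> max 1 (1 / m)" if "x \<in> qball Q" for x
  proof (cases "norm x \<le> 1")
    case False
    then have "norm x \<le> (norm x)\<^sup>2" by (simp add: power2_eq_square mult_le_cancel_left1)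
    also have "m * (norm x)\<^sup>2 < 1" using m(2)[of x] that by (simp add: qball_def)
    then have "(norm x)\<^sup>2 < 1 / m" using m(1) by (simp add: field_simps)
    finally show ?thesis by simp
  qed simp
  then show ?thesis unfolding bounded_iff by blast
qed

lemma weakly_symmetric_opposite_weight:
  assumes ws: "weakly_symmetric d alpha" and "i < d" and v0: "wt alpha i \<noteq> 0"
  obtains j c where "j < d" and "c > 0" and "wt alpha j = - (c *\<^sub>R wt alpha i)"
proof -
  define v where "v = wt alpha i"
  define S where "S = {j. j < d \<and> wt alpha j \<in> span {v}}"
  have "i \<in> S" using \<open>i < d\<close> by (simp add: S_def v_def span_base)
  then have "(\<Sum>j\<in>S. (if j = i then 1 else 0) *\<^sub>R wt alpha j) = v"
    by (simp add: S_def v_def if_distrib[of "\<lambda>c. c *\<^sub>R _"] sum.delta' cong: if_cong)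
  then have "v \<in> line_cone d alpha v"
    unfolding line_cone_def S_def[symmetric] by (intro CollectI exI[of _ "\<lambda>j. if j = i then 1 else 0"]) auto
  then have "line_cone d alpha v = span {v}"
    using ws v0 unfolding weakly_symmetric_def v_def by blast
  moreover have "- v \<in> span {v}" by (simp add: span_base span_neg)
  ultimately obtain c where c: "\<And>j. 0 \<le> c j" and sum: "- v = (\<Sum>j\<in>S. c j *\<^sub>R wt alpha j)"
    unfolding line_cone_def S_def[symmetric] by auto
  have "(\<Sum>j\<in>S. c j * (wt alpha j \<bullet> v)) = (\<Sum>j\<in>S. c j *\<^sub>R wt alpha j) \<bullet> v"
    by (simp add: inner_sum_left)
  also have "\<dots> = - (v \<bullet> v)" by (simp flip: sum)
  also have "\<dots> < 0" using v0 by (simp add: v_def)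
  finally obtain j where "j \<in> S" and "c j * (wt alpha j \<bullet> v) < 0"
    by (metis (no_types, lifting) not_less sum_nonneg)
  then have "wt alpha j \<bullet> v < 0" using c[of j] by (simp add: mult_less_0_iff)
  from \<open>j \<in> S\<close> obtain t where t: "wt alpha j = t *\<^sub>R v" by (auto simp: S_def span_singleton)
  with \<open>wt alpha j \<bullet> v < 0\<close> have "t < 0"
    by (metis inner_ge_zero inner_scaleR_left mult_less_0_iff not_less)
  show ?thesis using \<open>j \<in> S\<close> t \<open>t < 0\<close> by (intro that[of j "- t"]) (auto simp: S_def v_def)
qed

lemma mem_Hperp_iff: "mu \<in> Hperp d alpha lam \<longleftrightarrow> (\<forall>i\<in>Tzero d alpha lam. mu \<bullet> wt alpha i = 0)"
proof
  assume "\<forall>i\<in>Tzero d alpha lam. mu \<bullet> wt alpha i = 0"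
  then have "\<forall>h\<in>wt alpha ` Tzero d alpha lam. orthogonal mu h" by (auto simp: orthogonal_def)
  then have "orthogonal mu h" if "h \<in> Hsp d alpha lam" for h
    using that orthogonal_to_span unfolding Hsp_def by blast
  then show "mu \<in> Hperp d alpha lam" by (simp add: Hperp_def orthogonal_def)
qed (auto simp: Hperp_def Hsp_def span_base)

lemma subspace_Hperp: "subspace (Hperp d alpha lam)"
  unfolding subspace_def Hperp_def by (auto simp: inner_add_left)

lemma Tneg_scaleR: "t > 0 \<Longrightarrow> Tneg d alpha (t *\<^sub>R lam) = Tneg d alpha lam"
  by (simp add: Tneg_def mult_less_0_iff)

lemma mem_Hperp_if_Tneg_eq:
  assumes ws: "weakly_symmetric d alpha" and T: "Tneg d alpha mu = Tneg d alpha lam"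
  shows "mu \<in> Hperp d alpha lam"
  unfolding mem_Hperp_iff
proof
  fix i assume "i \<in> Tzero d alpha lam"
  then have "i < d" and lam_i: "lam \<bullet> wt alpha i = 0" by (simp_all add: Tzero_def)
  show "mu \<bullet> wt alpha i = 0"
  proof (cases "wt alpha i = 0")
    case False
    then obtain j c where "j < d" "c > 0" and j: "wt alpha j = - (c *\<^sub>R wt alpha i)"
      using weakly_symmetric_opposite_weight[OF ws \<open>i < d\<close>] by blast
    have "i \<notin> Tneg d alpha mu" "j \<notin> Tneg d alpha mu"
      using lam_i j unfolding T by (simp_all add: Tneg_def)
    then have "0 \<le> mu \<bullet> wt alpha i" "0 \<le> - c * (mu \<bullet> wt alpha i)"
      using \<open>i < d\<close> \<open>j < d\<close> j by (simp_all add: Tneg_def not_less)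
    then show ?thesis using \<open>c > 0\<close> by (simp add: mult_le_0_iff)
  qed simp
qed

lemma Tneg_eq_if_mem_Hperp:
  assumes ws: "weakly_symmetric d alpha" and sub: "Tneg d alpha lam \<subseteq> Tneg d alpha mu"
    and H: "mu \<in> Hperp d alpha lam"
  shows "Tneg d alpha mu = Tneg d alpha lam"
proof (rule equalityI[OF subsetI sub])
  fix i assume "i \<in> Tneg d alpha mu"
  then have "i < d" and mu_i: "mu \<bullet> wt alpha i < 0" by (auto simp: Tneg_def)
  have "\<not> lam \<bullet> wt alpha i = 0"
    using H mu_i \<open>i < d\<close> by (auto simp: mem_Hperp_iff Tzero_def)
  moreover have "\<not> lam \<bullet> wt alpha i > 0"
  proof
    assume pos: "lam \<bullet> wt alpha i > 0"
    then obtain j c where "j < d" "c > 0" and j: "wt alpha j = - (c *\<^sub>R wt alpha i)"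
      using weakly_symmetric_opposite_weight[OF ws \<open>i < d\<close>] by force
    then have "j \<in> Tneg d alpha lam" using pos by (simp add: Tneg_def)
    then have "- c * (mu \<bullet> wt alpha i) < 0" using sub j by (auto simp: Tneg_def)
    then show False using \<open>c > 0\<close> mu_i by (simp add: zero_less_mult_iff)
  qed
  ultimately show "i \<in> Tneg d alpha lam" using \<open>i < d\<close> by (simp add: Tneg_def)
qed

definition neg_cone :: "nat \<Rightarrow> (nat \<Rightarrow> int ^ 'n::finite) \<Rightarrow> real ^ 'n \<Rightarrow> (real ^ 'n) set" where
  "neg_cone d alpha lam = {mu. Tneg d alpha lam \<subseteq> Tneg d alpha mu}"

lemma neg_cone_eq_Inter_halfspaces:
  "neg_cone d alpha lam = (\<Inter>i\<in>Tneg d alpha lam. {mu. wt alpha i \<bullet> mu < 0})"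
  by (auto simp: neg_cone_def Tneg_def inner_commute)

lemma open_neg_cone: "open (neg_cone d alpha lam)"
  unfolding neg_cone_eq_Inter_halfspaces
  by (intro open_INT ballI open_halfspace_lt) (simp add: Tneg_def)

lemma convex_neg_cone: "convex (neg_cone d alpha lam)"
  unfolding neg_cone_eq_Inter_halfspaces by (intro convex_INT convex_halfspace_lt)

lemma Bset_eq_Hperp_Int:
  assumes "weakly_symmetric d alpha"
  shows "Bset d alpha Q lam = Hperp d alpha lam \<inter> (qball Q \<inter> neg_cone d alpha lam)"
proof (intro set_eqI iffI)
  fix mu assume "mu \<in> Bset d alpha Q lam"
  then show "mu \<in> Hperp d alpha lam \<inter> (qball Q \<inter> neg_cone d alpha lam)"
    using mem_Hperp_if_Tneg_eq[OF assms] by (simp add: Bset_def neg_cone_def)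
next
  fix mu assume "mu \<in> Hperp d alpha lam \<inter> (qball Q \<inter> neg_cone d alpha lam)"
  then show "mu \<in> Bset d alpha Q lam"
    using Tneg_eq_if_mem_Hperp[OF assms] by (simp add: Bset_def neg_cone_def)
qed

lemma Bset_nonempty: "Bset d alpha Q lam \<noteq> {}"
proof -
  have "0 \<in> qball Q" by (simp add: qball_def)
  then obtain e where "e > 0" and e: "ball 0 e \<subseteq> qball Q"
    using open_qball open_contains_ball by blast
  define t where "t = e / (norm lam + 1)"
  have "t > 0" using \<open>e > 0\<close> by (simp add: t_def add_nonneg_pos)
  have "norm (t *\<^sub>R lam) = e * (norm lam / (norm lam + 1))"
    using \<open>e > 0\<close> by (simp add: t_def)
  also have "\<dots> < e * 1" using \<open>e > 0\<close> by (intro mult_strict_left_mono) (simp_all add: add_nonneg_pos)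
  finally have "norm (t *\<^sub>R lam) < e" by simp
  then have "t *\<^sub>R lam \<in> qball Q" using e by auto
  then have "t *\<^sub>R lam \<in> Bset d alpha Q lam"
    using Tneg_scaleR[OF \<open>t > 0\<close>] by (simp add: Bset_def)
  then show ?thesis by blast
qed

lemma rel_interior_affine_Int_open:
  fixes S U :: "'a::euclidean_space set"
  assumes "affine S" and "open U"
  shows "rel_interior (S \<inter> U) = S \<inter> U"
proof -
  have "affine hull (S \<inter> U) \<subseteq> S" using assms(1) by (simp add: hull_minimal)
  then show ?thesis
    using assms(2) by (auto simp: mem_rel_interior intro!: exI[of _ U] dest: rel_interior_subset[THEN subsetD])
qed

lemma rel_frontier_subspace_Int_homeomorphic_sphere:
  fixes S U :: "'a::euclidean_space set"
  assumes S: "subspace S" and U: "open U" "convex U" "bounded U" and ne: "S \<inter> U \<noteq> {}"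
  shows "rel_frontier (S \<inter> U) homeomorphic sphere 0 1 \<inter> S"
proof -
  have "convex S" using S by (rule subspace_imp_convex)
  have "0 \<in> S \<inter> ball 0 1" using S by (simp add: subspace_0)
  have "aff_dim (S \<inter> U) = aff_dim S"
    using aff_dim_convex_Int_open[OF \<open>convex S\<close> U(1) ne] .
  also have "\<dots> = aff_dim (S \<inter> ball 0 1)"
    using \<open>convex S\<close> \<open>0 \<in> S \<inter> ball 0 1\<close> by (intro aff_dim_convex_Int_open[symmetric]) auto
  finally have "rel_frontier (S \<inter> U) homeomorphic rel_frontier (S \<inter> ball 0 1)"
    using \<open>convex S\<close> U by (intro homeomorphic_rel_frontiers_convex_bounded_sets convex_Int) auto
  also have "rel_frontier (S \<inter> ball 0 1) = frontier (ball 0 1) \<inter> S"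
    using S \<open>0 \<in> S \<inter> ball 0 1\<close>
    by (subst Int_commute, intro convex_affine_rel_frontier_Int) (auto simp: subspace_imp_affine, force)
  finally show ?thesis by (simp add: Int_commute)
qed

theorem mainTheorem3:
  fixes d :: nat and alpha :: "nat \<Rightarrow> int ^ 'n::finite"
    and Q :: "real ^ 'n ^ 'n" and lam :: "real ^ 'n"
  assumes "pos_def_form Q"
    and "faithful_weights d alpha"
    and "weakly_symmetric d alpha"
  shows "Phi d alpha Q lam \<subseteq> Hperp d alpha lam \<and>
         Phi d alpha Q lam homeomorphic (sphere 0 1 \<inter> Hperp d alpha lam)"
proof -
  define H where "H = Hperp d alpha lam"
  define U where "U = qball Q \<inter> neg_cone d alpha lam"
  have B: "Bset d alpha Q lam = H \<inter> U"
    unfolding H_def U_def using Bset_eq_Hperp_Int[OF assms(3)] .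
  have H: "subspace H" unfolding H_def by (rule subspace_Hperp)
  have Q_sym: "transpose Q = Q" and Q_psd: "\<And>x. 0 \<le> x \<bullet> (Q *v x)"
    using assms(1) unfolding pos_def_form_def by (metis less_eq_real_def inner_zero_left)+
  have U: "open U" "convex U" "bounded U"
    unfolding U_def using convex_qball[OF Q_sym Q_psd] bounded_qball[OF assms(1)]
    by (auto intro!: open_Int open_qball open_neg_cone convex_Int convex_neg_cone bounded_Int)
  have Phi: "Phi d alpha Q lam = rel_frontier (H \<inter> U)"
    using rel_interior_affine_Int_open[OF subspace_imp_affine[OF H] \<open>open U\<close>]
    by (simp add: Phi_def B rel_frontier_def)
  have "rel_frontier (H \<inter> U) \<subseteq> H"
    using closure_minimal[OF Int_lower1 closed_subspace[OF H]] by (auto simp: rel_frontier_def)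
  moreover have "rel_frontier (H \<inter> U) homeomorphic sphere 0 1 \<inter> H"
    using rel_frontier_subspace_Int_homeomorphic_sphere[OF H U] Bset_nonempty B by metis
  ultimately show ?thesis unfolding Phi H_def by blast
qed

end
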